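(* Let $S$ be a nonempty set of graphs on $\Pi$, $A$ the closed-above model generated by $S$, and $r>0$. Then for every integer $i$ with $1\le i<\mathrm{eqdom}(S^r)$, $(i+(n-\mathrm{cov}_i(S^r)))$-set agreement is solvable in $r$ rounds on $A$.
   Context: Fix $\Pi=\{p_1,\dots,p_n\}$. A graph is a directed graph on $\Pi$ containing all self-loops; $Out_G(p)=\{q:(p,q)\in E(G)\}$, $In_G(p)=\{q:(q,p)\in E(G)\}$, $Out_G(P)=\bigcup_{p\in P}Out_G(p)$. Computation proceeds in failure-free, communication-closed rounds: in round $r$ a graph $G_r$ is chosen and each $p$ receives the round-$r$ messages of the processes in $In_{G_r}(p)$. $\uparrow G=\{H:E(H)\supseteq E(G)\}$; the closed-above model generated by $S$ allows exactly the executions whose round graphs each lie in $\bigcup_{G\in S}\uparrow G$. In $k$-set agreement each process starts with an input from a totally ordered set $V_{in}$ and must decide a value so that every decided value is some process's input and at most $k$ distinct values are decided; it is solvable in $r$ rounds if some algorithm guarantees this, with all processes deciding after $r$ rounds, in every allowed execution and input assignment. $\mathrm{eqdom}(G)=\min\{i\in[1,n]:\forall P\subseteq\Pi,\ |P|=i\Rightarrow Out_G(P)=\Pi\}$, $\mathrm{eqdom}(S)=\max_{G\in S}\mathrm{eqdom}(G)$, $\mathrm{cov}_i(G)=\min_{P\subseteq\Pi,|P|=i}|Out_G(P)|$, $\mathrm{cov}_i(S)=\min_{G\in S}\mathrm{cov}_i(G)$. The graph path product $G\otimes H$ has edge set $\{(u,v):\exists w,\ (u,w)\in E(G)\wedge(w,v)\in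 E(H)\}$, and $S^r=\{G_1\otimes\cdots\otimes G_r: G_1,\dots,G_r\in S\}$. *)

theory Defs
  imports Main
begin

(* Processes: elements of a finite type 'p, so Pi = UNIV and n = card (UNIV :: 'p set).
   A graph is an edge relation on 'p containing all self-loops. *)

definition graphs :: "('p \<times> 'p) set set" where
  "graphs = {E. \<forall>p. (p, p) \<in> E}"

definition Out :: "('p \<times> 'p) set \<Rightarrow> 'p \<Rightarrow> 'p set" where
  "Out G p = {q. (p, q) \<in> G}"

definition In :: "('p \<times> 'p) set \<Rightarrow> 'p \<Rightarrow> 'p set" where
  "In G p = {q. (q, p) \<in> G}"

definition OutS :: "('p \<times> 'p) set \<Rightarrow> 'p set \<Rightarrow> 'p set" where
  "OutS G P = (\<Union>p\<in>P. Out G p)"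

definition eqdom :: "('p::finite \<times> 'p) set \<Rightarrow> nat" where
  "eqdom G = Min {i. 1 \<le> i \<and> i \<le> card (UNIV :: 'p set) \<and>
                    (\<forall>P::'p set. card P = i \<longrightarrow> OutS G P = UNIV)}"

definition eqdom_set :: "('p::finite \<times> 'p) set set \<Rightarrow> nat" where
  "eqdom_set S = Max (eqdom ` S)"

definition cov :: "nat \<Rightarrow> ('p::finite \<times> 'p) set \<Rightarrow> nat" where
  "cov i G = Min {card (OutS G P) | P::'p set. card P = i}"

definition cov_set :: "nat \<Rightarrow> ('p::finite \<times> 'p) set set \<Rightarrow> nat" where
  "cov_set i S = Min (cov i ` S)"

definition gprod :: "('p \<times> 'p) set \<Rightarrow> ('p \<times> 'p) set \<Rightarrow> ('p \<times> 'p) set" where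
  "gprod G H = {(u, v). \<exists>w. (u, w) \<in> G \<and> (w, v) \<in> H}"

(* S^r = { G_1 \<otimes> ... \<otimes> G_r }; spow S 0 = {Id} is only an auxiliary base case
   (the identity graph is a neutral element of \<otimes>), used only for r > 0 *)
fun spow :: "('p \<times> 'p) set set \<Rightarrow> nat \<Rightarrow> ('p \<times> 'p) set set" where
  "spow S 0 = {Id}"
| "spow S (Suc r) = {gprod G H | G H. G \<in> spow S r \<and> H \<in> S}"

definition up :: "('p \<times> 'p) set \<Rightarrow> ('p \<times> 'p) set set" where
  "up G = {H \<in> graphs. G \<subseteq> H}"

(* set of graphs allowed in each round by the closed-above model generated by S *)
definition closed_above :: "('p \<times> 'p) set set \<Rightarrow> ('p \<times> 'p) set set" where
  "closed_above S = (\<Union>G\<in>S. up G)"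

(* Local states / messages of algorithms: a rich (full-information-capable) type *)
datatype ('p, 'v) view = Init 'p 'v | Step "('p, 'v) view" "'p \<Rightarrow> ('p, 'v) view option"

(* A round-based algorithm:
   init p x        initial state of p with input x
   send t p s      message sent by p in round t (in state s)
   trn t p s M   new state of p after round t, M q = Some m iff p received m from q
   dec p s         decision of p in state s
   Execution: graph sequence Gs, round t (t >= 1) uses graph Gs t. *)
fun run :: "('p \<Rightarrow> 'v \<Rightarrow> 's) \<Rightarrow> (nat \<Rightarrow> 'p \<Rightarrow> 's \<Rightarrow> 'm)
            \<Rightarrow> (nat \<Rightarrow> 'p \<Rightarrow> 's \<Rightarrow> ('p \<Rightarrow> 'm option) \<Rightarrow> 's)
            \<Rightarrow> (nat \<Rightarrow> ('p \<times> 'p) set) \<Rightarrow> ('p \<Rightarrow> 'v) \<Rightarrow> nat \<Rightarrow> 'p \<Rightarrow> 's" where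
  "run init send trn Gs x 0 p = init p (x p)"
| "run init send trn Gs x (Suc t) p =
     trn (Suc t) p (run init send trn Gs x t p)
       (\<lambda>q. if q \<in> In (Gs (Suc t)) p
             then Some (send (Suc t) q (run init send trn Gs x t q)) else None)"

definition ksa_solvable :: "'v::linorder itself \<Rightarrow> nat \<Rightarrow> nat \<Rightarrow> ('p \<times> 'p) set set \<Rightarrow> bool" where
  "ksa_solvable _ k r A \<longleftrightarrow>
     (\<exists>(init :: 'p \<Rightarrow> 'v \<Rightarrow> ('p, 'v) view)
        (send :: nat \<Rightarrow> 'p \<Rightarrow> ('p, 'v) view \<Rightarrow> ('p, 'v) view)
        (trn :: nat \<Rightarrow> 'p \<Rightarrow> ('p, 'v) view \<Rightarrow> ('p \<Rightarrow> ('p, 'v) view option) \<Rightarrow> ('p, 'v) view)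
        (dec :: 'p \<Rightarrow> ('p, 'v) view \<Rightarrow> 'v).
      \<forall>(Gs :: nat \<Rightarrow> ('p \<times> 'p) set) (x :: 'p \<Rightarrow> 'v).
        (\<forall>t. Gs t \<in> A) \<longrightarrow>
        (let d = (\<lambda>p. dec p (run init send trn Gs x r p)) in
           (\<forall>p. \<exists>q. d p = x q) \<and> card (range d) \<le> k))"

end

theory Submission
  imports Defs
begin

text \<open>Every process floods the smallest input it has seen so far. After \<open>r\<close> rounds a process
therefore decides the minimum input among its \<open>r\<close>-round predecessors, and the communication
graph of these rounds contains some \<open>G \<in> S\<^sup>r\<close>. Let \<open>P\<close> consist of \<open>i\<close> processes with the
smallest inputs. A process in \<open>Out\<^sub>G(P)\<close> decides a value that is at most some input of \<open>P\<close>,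
hence one of the inputs of \<open>P\<close>; these are at most \<open>i\<close> values. The remaining at most
\<open>n - cov\<^sub>i(S\<^sup>r)\<close> processes add at most one value each.\<close>

lemma Min_image_UN:
  fixes f :: "'a \<Rightarrow> 'b::linorder"
  assumes "finite I" "I \<noteq> {}" "\<And>i. i \<in> I \<Longrightarrow> finite (A i) \<and> A i \<noteq> {}"
  shows "Min (f ` (\<Union>i\<in>I. A i)) = Min ((\<lambda>i. Min (f ` A i)) ` I)"
  using assms
proof (induction I rule: finite_ne_induct)
  case (singleton i) then show ?case by simp
next
  case (insert i I)
  have "Min (f ` (\<Union>j\<in>insert i I. A j)) = min (Min (f ` A i)) (Min (f ` (\<Union>j\<in>I. A j)))"
    using insert by (simp add: image_Un Min.union)
  then show ?case using insert by simp
qed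

lemma ex_lower_set:
  fixes x :: "'p::finite \<Rightarrow> 'v::linorder"
  assumes "i \<le> card (UNIV :: 'p set)"
  shows "\<exists>P. card P = i \<and> (\<forall>a\<in>P. \<forall>b. b \<notin> P \<longrightarrow> x a \<le> x b)"
proof -
  obtain xs where xs: "set xs = (UNIV :: 'p set)" "distinct xs"
    using finite_distinct_list[of "UNIV :: 'p set"] by auto
  define ys where "ys = sort_key x xs"
  have ys: "set ys = UNIV" "distinct ys" "sorted (map x ys)" "length ys = card (UNIV :: 'p set)"
    using xs by (auto simp: ys_def distinct_card[symmetric])
  define P where "P = set (take i ys)"
  have "card P = i"
    using ys assms by (simp add: P_def distinct_card)
  moreover have "x a \<le> x b" if "a \<in> P" "b \<notin> P" for a b
  proof -
    have "b \<in> set (drop i ys)"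
      using that(2) ys(1) unfolding P_def by (metis UNIV_I UnE append_take_drop_id set_append)
    moreover have "sorted (map x (take i ys) @ map x (drop i ys))"
      using ys(3) by (metis append_take_drop_id map_append)
    ultimately show ?thesis
      using that(1) unfolding P_def sorted_append by auto
  qed
  ultimately show ?thesis by blast
qed

lemma card_range_le_if_bounded_by_lower_set:
  fixes d x :: "'p::finite \<Rightarrow> 'v::linorder"
  assumes lower: "\<And>a b. a \<in> P \<Longrightarrow> b \<notin> P \<Longrightarrow> x a \<le> x b"
    and valid: "\<And>p. d p \<in> range x"
    and bounded: "\<And>p. p \<in> Q \<Longrightarrow> \<exists>q\<in>P. d p \<le> x q"
  shows "card (range d) \<le> card P + (card (UNIV :: 'p set) - card Q)"
proof -
  have "d ` Q \<subseteq> x ` P"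
  proof
    fix v assume "v \<in> d ` Q"
    then obtain p q b where "p \<in> Q" "v = d p" "q \<in> P" "d p \<le> x q" "d p = x b"
      using valid bounded by blast
    then show "v \<in> x ` P"
      using lower by (cases "b \<in> P") (auto intro!: image_eqI[of _ _ q] order.antisym)
  qed
  then have "range d \<subseteq> x ` P \<union> d ` (UNIV - Q)"
    by blast
  then have "card (range d) \<le> card (x ` P \<union> d ` (UNIV - Q))"
    by (intro card_mono) auto
  also have "\<dots> \<le> card P + card (UNIV - Q)"
    by (intro order.trans[OF card_Un_le] add_mono card_image_le) simp_all
  also have "card (UNIV - Q) = card (UNIV :: 'p set) - card Q"
    by (simp add: card_Diff_subset)
  finally show ?thesis .
qed

lemma gprod_eq_relcomp: "gprod G H = G O H"
  by (auto simp: gprod_def)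

lemma spow_subset_graphs: "S \<subseteq> graphs \<Longrightarrow> spow S t \<subseteq> graphs"
  by (induction t) (auto simp: graphs_def gprod_def)

lemma spow_nonempty: "S \<noteq> {} \<Longrightarrow> spow S t \<noteq> {}"
  by (induction t) auto

lemma eqdom_le_card:
  assumes "G \<in> graphs"
  shows "eqdom (G :: ('p::finite \<times> 'p) set) \<le> card (UNIV :: 'p set)"
proof -
  have "OutS G P = UNIV" if "card P = card (UNIV :: 'p set)" for P :: "'p set"
  proof -
    have "P = UNIV" using that by (simp add: card_eq_UNIV_imp_eq_UNIV)
    then show ?thesis using assms by (auto simp: OutS_def Out_def graphs_def)
  qed
  moreover have "1 \<le> card (UNIV :: 'p set)"
    using finite_UNIV_card_ge_0[where 'a = 'p] by simp
  ultimately show ?thesis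
    unfolding eqdom_def by (intro Min_le) auto
qed

lemma eqdom_set_le_card:
  assumes "T \<noteq> {}" "T \<subseteq> graphs"
  shows "eqdom_set (T :: ('p::finite \<times> 'p) set set) \<le> card (UNIV :: 'p set)"
  unfolding eqdom_set_def using assms eqdom_le_card by (auto simp: Max_le_iff)

lemma cov_set_le_card_OutS:
  assumes "G \<in> T" "G \<subseteq> H" "card P = i"
  shows "cov_set i (T :: ('p::finite \<times> 'p) set set) \<le> card (OutS H P)"
proof -
  have "cov_set i T \<le> cov i G"
    unfolding cov_set_def using assms(1) by simp
  also have "\<dots> \<le> card (OutS G P)"
    unfolding cov_def using assms(3) by (intro Min_le) auto
  also have "\<dots> \<le> card (OutS H P)"
    using assms(2) by (intro card_mono) (auto simp: OutS_def Out_def)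
  finally show ?thesis .
qed

text \<open>The self-loops make every process keep its own value even if a round graph lacks them.\<close>

fun heard_of :: "(nat \<Rightarrow> ('p \<times> 'p) set) \<Rightarrow> nat \<Rightarrow> ('p \<times> 'p) set" where
  "heard_of Gs 0 = Id"
| "heard_of Gs (Suc t) = heard_of Gs t O (Gs (Suc t) \<union> Id)"

lemma heard_of_refl: "(p, p) \<in> heard_of Gs t"
  by (induction t) auto

lemma spow_below_heard_of:
  assumes "\<forall>t. Gs t \<in> closed_above S"
  shows "\<exists>G\<in>spow S t. G \<subseteq> heard_of Gs t"
proof (induction t)
  case 0 then show ?case by simp
next
  case (Suc t)
  then obtain G where "G \<in> spow S t" "G \<subseteq> heard_of Gs t" by blast
  moreover obtain H where "H \<in> S" "H \<subseteq> Gs (Suc t)"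
    using assms unfolding closed_above_def up_def by blast
  ultimately have "gprod G H \<in> spow S (Suc t)" "G O H \<subseteq> heard_of Gs (Suc t)"
    by auto
  then show ?case
    unfolding gprod_eq_relcomp by blast
qed

fun view_value :: "('p, 'v) view \<Rightarrow> 'v" where
  "view_value (Init p v) = v"
| "view_value (Step s f) = view_value s"

definition min_flood_trans ::
  "nat \<Rightarrow> 'p \<Rightarrow> ('p, 'v::linorder) view \<Rightarrow> ('p \<Rightarrow> ('p, 'v) view option) \<Rightarrow> ('p, 'v) view" where
  "min_flood_trans t p s M = Init p (Min (insert (view_value s) (view_value ` ran M)))"

abbreviation min_flood_run ::
  "(nat \<Rightarrow> ('p \<times> 'p) set) \<Rightarrow> ('p \<Rightarrow> 'v::linorder) \<Rightarrow> nat \<Rightarrow> 'p \<Rightarrow> ('p, 'v) view" where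
  "min_flood_run \<equiv> run Init (\<lambda>t p s. s) min_flood_trans"

lemma min_flood_run_Suc:
  fixes Gs :: "nat \<Rightarrow> ('p::finite \<times> 'p) set"
  shows "view_value (min_flood_run Gs x (Suc t) p) =
    Min ((\<lambda>q. view_value (min_flood_run Gs x t q)) ` insert p (In (Gs (Suc t)) p))"
proof -
  let ?M = "\<lambda>q. if q \<in> In (Gs (Suc t)) p then Some (min_flood_run Gs x t q) else None"
  have "ran ?M = (\<lambda>q. min_flood_run Gs x t q) ` In (Gs (Suc t)) p"
    by (auto simp: ran_def split: if_splits)
  then show ?thesis
    by (simp add: min_flood_trans_def image_image)
qed

lemma min_flood_value:
  fixes Gs :: "nat \<Rightarrow> ('p::finite \<times> 'p) set"
  shows "view_value (min_flood_run Gs x t p) = Min (x ` {q. (q, p) \<in> heard_of Gs t})"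
proof (induction t arbitrary: p)
  case 0 then show ?case by simp
next
  case (Suc t)
  define W where "W = insert p (In (Gs (Suc t)) p)"
  have "view_value (min_flood_run Gs x (Suc t) p) =
      Min ((\<lambda>w. view_value (min_flood_run Gs x t w)) ` W)"
    unfolding W_def by (rule min_flood_run_Suc)
  also have "\<dots> = Min ((\<lambda>w. Min (x ` {q. (q, w) \<in> heard_of Gs t})) ` W)"
    by (simp only: Suc.IH)
  also have "\<dots> = Min (x ` (\<Union>w\<in>W. {q. (q, w) \<in> heard_of Gs t}))"
    by (rule Min_image_UN[symmetric]) (auto simp: W_def intro: heard_of_refl)
  also have "(\<Union>w\<in>W. {q. (q, w) \<in> heard_of Gs t}) = {q. (q, p) \<in> heard_of Gs (Suc t)}"
    by (auto simp: W_def In_def)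
  finally show ?case .
qed

lemma min_flood_valid:
  fixes Gs :: "nat \<Rightarrow> ('p::finite \<times> 'p) set"
  shows "view_value (min_flood_run Gs x t p) \<in> range x"
proof -
  have "x ` {q. (q, p) \<in> heard_of Gs t} \<noteq> {}"
    using heard_of_refl[of p Gs t] by blast
  then have "Min (x ` {q. (q, p) \<in> heard_of Gs t}) \<in> x ` {q. (q, p) \<in> heard_of Gs t}"
    by (intro Min_in) simp_all
  then show ?thesis
    unfolding min_flood_value by blast
qed

lemma min_flood_le_input:
  fixes Gs :: "nat \<Rightarrow> ('p::finite \<times> 'p) set"
  assumes "(q, p) \<in> heard_of Gs t"
  shows "view_value (min_flood_run Gs x t p) \<le> x q"
  unfolding min_flood_value using assms by simp

lemma ksa_solvable_by_min_flood:
  assumes "\<And>(Gs :: nat \<Rightarrow> ('p \<times> 'p) set) (x :: 'p \<Rightarrow> 'v).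
    \<forall>t. Gs t \<in> A \<Longrightarrow> card (range (\<lambda>p. view_value (min_flood_run Gs x r p))) \<le> k"
  shows "ksa_solvable TYPE('v::linorder) k r (A :: ('p::finite \<times> 'p) set set)"
proof -
  have "(\<forall>p. \<exists>q. view_value (min_flood_run Gs x r p) = x q) \<and>
      card (range (\<lambda>p. view_value (min_flood_run Gs x r p))) \<le> k"
    if "\<forall>t. Gs t \<in> A" for Gs :: "nat \<Rightarrow> ('p \<times> 'p) set" and x :: "'p \<Rightarrow> 'v"
    using min_flood_valid assms[OF that] by blast
  then show ?thesis
    unfolding ksa_solvable_def Let_def
    by (intro exI[of _ Init] exI[of _ "\<lambda>t p s. s"] exI[of _ min_flood_trans]
        exI[of _ "\<lambda>p. view_value"]) simp
qed

theorem theorem8: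
  fixes S :: "('p::finite \<times> 'p) set set" and r i :: nat
  assumes "S \<noteq> {}" and "S \<subseteq> graphs" and "r > 0"
    and "1 \<le> i" and "i < eqdom_set (spow S r)"
  shows "ksa_solvable TYPE('v::linorder) (i + (card (UNIV :: 'p set) - cov_set i (spow S r))) r
           (closed_above S)"
proof (rule ksa_solvable_by_min_flood)
  fix Gs :: "nat \<Rightarrow> ('p \<times> 'p) set" and x :: "'p \<Rightarrow> 'v"
  assume rounds: "\<forall>t. Gs t \<in> closed_above S"
  let ?d = "\<lambda>p. view_value (min_flood_run Gs x r p)"
  have "eqdom_set (spow S r) \<le> card (UNIV :: 'p set)"
    using assms(1,2) by (intro eqdom_set_le_card spow_nonempty spow_subset_graphs)
  then obtain P where P: "card P = i" "\<forall>a\<in>P. \<forall>b. b \<notin> P \<longrightarrow> x a \<le> x b"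
    using ex_lower_set[of i x] assms(5) by force
  obtain G where G: "G \<in> spow S r" "G \<subseteq> heard_of Gs r"
    using spow_below_heard_of[OF rounds] by blast
  define Q where "Q = OutS (heard_of Gs r) P"
  have bounded: "\<exists>q\<in>P. ?d p \<le> x q" if p: "p \<in> Q" for p
  proof -
    obtain q where "q \<in> P" "(q, p) \<in> heard_of Gs r"
      using p unfolding Q_def OutS_def Out_def by blast
    then show ?thesis
      using min_flood_le_input by blast
  qed
  have "card (range ?d) \<le> card P + (card (UNIV :: 'p set) - card Q)"
    by (rule card_range_le_if_bounded_by_lower_set[of P x])
      (use P(2) min_flood_valid bounded in blast)+
  moreover have "cov_set i (spow S r) \<le> card Q"
    unfolding Q_def using G P(1) by (rule cov_set_le_card_OutS)
  ultimately show "card (range ?d) \<le> i + (card (UNIV :: 'p set) - cov_set i (spow S r))"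
    using P(1) by linarith
qed

end
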